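(* Let $m,n\in\mathbb{N}$, let $0<q_{\ell}<1$ for $1\le\ell\le m$, and let $v_{j,\ell}\in\mathbb{C}$ for $1\le j\le n$, $1\le\ell\le m$. Then the $n\times n$ matrix \[ \left(\prod_{\ell=1}^{m}\theta_{3}\left(e^{2\pi i(v_{j,\ell}-\overline{v_{k,\ell}})},\ q_{\ell}\right)\right)_{j,k=1}^{n} \] is positive semidefinite.
   Context: The Jacobi theta function is defined by $\theta_{3}(z,q)=\sum_{n=-\infty}^{\infty}q^{n^{2}}e^{2\pi inv}$ where $z=e^{2\pi iv}$, $v\in\mathbb{C}$, $|q|<1$. A complex matrix $A=(a_{j,k})_{j,k=1}^n$ is positive semidefinite if $\sum_{j,k}a_{j,k}z_j\overline{z_k}\ge0$ for all $z_1,\dots,z_n\in\mathbb{C}$. *)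

theory Defs
  imports "HOL-Analysis.Analysis" "HOL-Library.Complex_Order"
begin

text \<open>Jacobi theta function theta_3(z,q) with z = exp(2 pi i v), written as a function
  of the parameter v: sum over all integers n of q^(n^2) exp(2 pi i n v).\<close>
definition theta3 :: "complex \<Rightarrow> complex \<Rightarrow> complex" where
  "theta3 v q = (\<Sum>\<^sub>\<infinity>n::int. q powi (n^2) * exp (2 * pi * \<i> * of_int n * v))"

definition psd_matrix :: "nat \<Rightarrow> (nat \<Rightarrow> nat \<Rightarrow> complex) \<Rightarrow> bool" where
  "psd_matrix n a \<longleftrightarrow>
     (\<forall>z :: nat \<Rightarrow> complex. (\<Sum>j=1..n. \<Sum>k=1..n. a j k * z j * cnj (z k)) \<ge> 0)"

end

theory Submission
  imports Defs
begin

text \<open>Writing \<open>e\<^sub>t(u) = exp (2 \<pi> i t u)\<close>, the Fourier expansion of the theta function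
  reads \<open>\<theta>\<^sub>3(u\<^sub>j - conj u\<^sub>k, q) = \<Sum>\<^sub>t q^(t\<^sup>2) e\<^sub>t(u\<^sub>j) conj (e\<^sub>t(u\<^sub>k))\<close>, so for real
  \<open>0 < q < 1\<close> the kernel \<open>(j,k) \<mapsto> \<theta>\<^sub>3(u\<^sub>j - conj u\<^sub>k, q)\<close> is a convergent sum of rank-one
  positive semidefinite kernels with nonnegative weights. Hence the entrywise product of any
  positive semidefinite matrix with it is again positive semidefinite (a Schur product argument
  done term by term), and the theorem follows by induction on the number of factors.\<close>

lemma has_sum_sum:
  fixes f :: "'i \<Rightarrow> 'a \<Rightarrow> 'b::topological_comm_monoid_add"
  assumes "finite I" "\<And>i. i \<in> I \<Longrightarrow> (f i has_sum s i) A"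
  shows "((\<lambda>x. \<Sum>i\<in>I. f i x) has_sum (\<Sum>i\<in>I. s i)) A"
  using assms by (induction I rule: finite_induct) (simp_all add: has_sum_add)

lemma psd_matrix_rank_one: "psd_matrix n (\<lambda>j k. a j * cnj (a k))"
  unfolding psd_matrix_def
proof
  fix z :: "nat \<Rightarrow> complex"
  have "(\<Sum>j=1..n. \<Sum>k=1..n. a j * cnj (a k) * z j * cnj (z k))
      = (\<Sum>j=1..n. a j * z j) * cnj (\<Sum>k=1..n. a k * z k)"
    by (simp add: sum_product mult_ac)
  also have "\<dots> \<ge> 0"
    unfolding complex_mult_cnj by (simp add: less_eq_complex_def)
  finally show "(\<Sum>j=1..n. \<Sum>k=1..n. a j * cnj (a k) * z j * cnj (z k)) \<ge> 0" .
qed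

lemma psd_matrix_mult_rank_one:
  assumes "psd_matrix n B"
  shows "psd_matrix n (\<lambda>j k. B j k * (a j * cnj (a k)))"
  unfolding psd_matrix_def
proof
  fix z :: "nat \<Rightarrow> complex"
  have "0 \<le> (\<Sum>j=1..n. \<Sum>k=1..n. B j k * (z j * a j) * cnj (z k * a k))"
    using assms unfolding psd_matrix_def by (rule spec)
  then show "0 \<le> (\<Sum>j=1..n. \<Sum>k=1..n. B j k * (a j * cnj (a k)) * z j * cnj (z k))"
    by (simp add: mult_ac)
qed

lemma psd_matrix_scale_nonneg:
  assumes "psd_matrix n B" "c \<ge> 0"
  shows "psd_matrix n (\<lambda>j k. complex_of_real c * B j k)"
  unfolding psd_matrix_def
proof
  fix z :: "nat \<Rightarrow> complex"
  have "0 \<le> complex_of_real c * (\<Sum>j=1..n. \<Sum>k=1..n. B j k * z j * cnj (z k))"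
    using assms unfolding psd_matrix_def by (intro mult_nonneg_nonneg) (auto simp: less_eq_complex_def)
  then show "0 \<le> (\<Sum>j=1..n. \<Sum>k=1..n. complex_of_real c * B j k * z j * cnj (z k))"
    by (simp add: sum_distrib_left mult_ac)
qed

lemma psd_matrix_has_sum:
  assumes "\<And>t. t \<in> T \<Longrightarrow> psd_matrix n (A t)"
    and "\<And>j k. ((\<lambda>t. A t j k) has_sum B j k) T"
  shows "psd_matrix n B"
  unfolding psd_matrix_def
proof
  fix z :: "nat \<Rightarrow> complex"
  let ?form = "\<lambda>t. \<Sum>j=1..n. \<Sum>k=1..n. A t j k * z j * cnj (z k)"
  have sum: "(?form has_sum (\<Sum>j=1..n. \<Sum>k=1..n. B j k * z j * cnj (z k))) T"
    by (intro has_sum_sum finite_atLeastAtMost has_sum_cmult_left assms(2))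
  have "0 \<le> infsum ?form T"
  proof (rule infsum_nonneg_complex)
    show "?form summable_on T"
      using sum by (rule has_sum_imp_summable)
    show "0 \<le> ?form t" if "t \<in> T" for t
      using assms(1)[OF that] unfolding psd_matrix_def by blast
  qed
  then show "0 \<le> (\<Sum>j=1..n. \<Sum>k=1..n. B j k * z j * cnj (z k))"
    using sum by (simp add: infsumI)
qed

lemma summable_on_exp_neg_abs_int: "(\<lambda>n::int. exp (- real_of_int \<bar>n\<bar>)) summable_on UNIV"
proof -
  have geometric: "(\<lambda>k::nat. exp (- real k)) summable_on UNIV"
  proof (rule norm_summable_imp_summable_on)
    have "(\<lambda>k::nat. norm (exp (- real k))) = (\<lambda>k. exp (-1) ^ k)"
      by (auto simp: exp_of_nat_mult[symmetric])
    then show "summable (\<lambda>k::nat. norm (exp (- real k)))"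
      by (simp add: summable_geometric)
  qed
  have "(\<lambda>n::int. exp (- real_of_int \<bar>n\<bar>)) summable_on range int"
    using geometric by (subst summable_on_reindex) (auto simp: o_def inj_on_def)
  moreover have "(\<lambda>n::int. exp (- real_of_int \<bar>n\<bar>)) summable_on range (\<lambda>k. - int k)"
    using geometric by (subst summable_on_reindex) (auto simp: o_def inj_on_def)
  moreover have "range int \<union> range (\<lambda>k. - int k) = UNIV"
    by (auto simp: image_iff) (metis int_cases2)
  ultimately show ?thesis
    by (metis summable_on_union)
qed

lemma neg_quadratic_le_vertex:
  fixes L b y :: real
  assumes "L > 0"
  shows "- L * y\<^sup>2 + b * y \<le> b\<^sup>2 / (4 * L)"
proof -
  have "4 * L * (- L * y\<^sup>2 + b * y) \<le> b\<^sup>2"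
    using zero_le_power2[of "2 * L * y - b"] by (simp add: power2_eq_square algebra_simps)
  then show ?thesis
    using assms by (simp add: field_simps mult.commute)
qed

lemma theta3_summand_summable:
  fixes q :: real and w :: complex
  assumes "0 < q" "q < 1"
  shows "(\<lambda>n::int. complex_of_real q powi (n\<^sup>2) * exp (2 * pi * \<i> * of_int n * w)) summable_on UNIV"
proof -
  define L where "L = - ln q"
  have L: "L > 0"
    using assms by (simp add: L_def)
  define b where "b = 2 * pi * \<bar>Im w\<bar> + 1"
  define K where "K = b\<^sup>2 / (4 * L)"
  text \<open>The Gaussian decay \<open>q^(n\<^sup>2)\<close> beats the exponential growth of \<open>|exp (2 \<pi> i n w)|\<close>
    with room to spare for an extra factor \<open>exp |n|\<close>.\<close>
  have bound: "norm (complex_of_real q powi (n\<^sup>2) * exp (2 * pi * \<i> * of_int n * w))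
      \<le> exp K * exp (- real_of_int \<bar>n\<bar>)" for n :: int
  proof -
    have "norm (complex_of_real q powi (n\<^sup>2) * exp (2 * pi * \<i> * of_int n * w))
        = exp (real_of_int (n\<^sup>2) * ln q - 2 * pi * of_int n * Im w)"
      using assms by (simp add: norm_mult norm_power_int powr_real_of_int'[symmetric] powr_def
                                exp_diff exp_minus field_simps)
    also have "\<dots> \<le> exp (K - real_of_int \<bar>n\<bar>)"
    proof -
      have "- 2 * pi * of_int n * Im w \<le> 2 * pi * \<bar>Im w\<bar> * real_of_int \<bar>n\<bar>"
        using abs_ge_minus_self[of "2 * pi * of_int n * Im w"] by (simp add: abs_mult)
      moreover have "- L * (real_of_int \<bar>n\<bar>)\<^sup>2 + b * real_of_int \<bar>n\<bar> \<le> K"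
        unfolding K_def by (rule neg_quadratic_le_vertex[OF L])
      ultimately show ?thesis
        unfolding L_def b_def by (simp add: algebra_simps)
    qed
    also have "\<dots> = exp K * exp (- real_of_int \<bar>n\<bar>)"
      by (simp add: exp_diff exp_minus field_simps)
    finally show ?thesis .
  qed
  have "(\<lambda>n::int. norm (complex_of_real q powi (n\<^sup>2) * exp (2 * pi * \<i> * of_int n * w)))
          summable_on UNIV"
    by (rule summable_on_comparison_test[OF summable_on_cmult_right[OF summable_on_exp_neg_abs_int]])
       (use bound in auto)
  then show ?thesis
    by (simp add: summable_on_iff_abs_summable_on_complex)
qed

lemma theta3_has_sum_rank_one:
  fixes q :: real
  assumes "0 < q" "q < 1"
  shows "((\<lambda>t::int. complex_of_real (q powi (t\<^sup>2))
             * (exp (2 * pi * \<i> * of_int t * u) * cnj (exp (2 * pi * \<i> * of_int t * u'))))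
           has_sum theta3 (u - cnj u') (complex_of_real q)) UNIV"
proof -
  have "exp (2 * pi * \<i> * of_int t * u) * cnj (exp (2 * pi * \<i> * of_int t * u'))
      = exp (2 * pi * \<i> * of_int t * (u - cnj u'))" for t :: int
    by (simp add: exp_cnj exp_add[symmetric] algebra_simps)
  then show ?thesis
    using theta3_summand_summable[OF assms, of "u - cnj u'"]
    by (simp add: theta3_def has_sum_iff of_real_power_int)
qed

lemma psd_matrix_mult_theta3:
  fixes q :: real
  assumes "psd_matrix n B" "0 < q" "q < 1"
  shows "psd_matrix n (\<lambda>j k. B j k * theta3 (u j - cnj (u k)) (complex_of_real q))"
proof (rule psd_matrix_has_sum)
  define e where "e t u = exp (2 * pi * \<i> * of_int t * u)" for t :: int and u
  show "psd_matrix n (\<lambda>j k. complex_of_real (q powi (t\<^sup>2)) * (B j k * (e t (u j) * cnj (e t (u k)))))"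
    for t
    using assms by (intro psd_matrix_scale_nonneg psd_matrix_mult_rank_one) auto
  show "((\<lambda>t. complex_of_real (q powi (t\<^sup>2)) * (B j k * (e t (u j) * cnj (e t (u k)))))
          has_sum B j k * theta3 (u j - cnj (u k)) (complex_of_real q)) UNIV" for j k
    unfolding e_def
    by (subst mult.left_commute)
       (rule has_sum_cmult_right[OF theta3_has_sum_rank_one[OF assms(2,3)]])
qed

theorem mainTheorem1:
  fixes m n :: nat and q :: "nat \<Rightarrow> real" and v :: "nat \<Rightarrow> nat \<Rightarrow> complex"
  assumes "\<forall>l\<in>{1..m}. 0 < q l \<and> q l < 1"
  shows "psd_matrix n (\<lambda>j k. \<Prod>l=1..m. theta3 (v j l - cnj (v k l)) (complex_of_real (q l)))"
  using assms
proof (induction m)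
  case 0
  show ?case
    using psd_matrix_rank_one[of n "\<lambda>_. 1"] by simp
next
  case (Suc m)
  then have "psd_matrix n (\<lambda>j k. \<Prod>l=1..m. theta3 (v j l - cnj (v k l)) (complex_of_real (q l)))"
    by simp
  with Suc.prems show ?case
    by (simp add: psd_matrix_mult_theta3)
qed

end
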